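(* The following five $9$-dimensional complex Lie algebras are mutually non-isomorphic. Each has basis $\mathbf x_1,\dots,\mathbf x_7,\mathbf y_1,\mathbf y_2$, with the listed nonzero brackets (together with those obtained by antisymmetry) and all other brackets of basis elements equal to zero: (1) $N^{9,2}_1$: $[\mathbf x_1,\mathbf x_2]=[\mathbf x_4,\mathbf x_5]=[\mathbf x_6,\mathbf x_7]=\mathbf y_1$, $[\mathbf x_3,\mathbf x_7]=\mathbf y_2$; (2) $N^{9,2}_2$: $[\mathbf x_2,\mathbf x_7]=[\mathbf x_4,\mathbf x_5]=\mathbf y_1$, $[\mathbf x_1,\mathbf x_3]=[\mathbf x_6,\mathbf x_7]=\mathbf y_2$; (3) $N^{9,2}_3$: $[\mathbf x_1,\mathbf x_2]=[\mathbf x_3,\mathbf x_7]=[\mathbf x_5,\mathbf x_6]=\mathbf y_1$, $[\mathbf x_4,\mathbf x_6]=[\mathbf x_5,\mathbf x_7]=\mathbf y_2$; (4) $N^{9,2}_4$: $[\mathbf x_7,\mathbf x_2]=[\mathbf x_4,\mathbf x_5]=[\mathbf x_6,\mathbf x_1]=\mathbf y_1$, $[\mathbf x_7,\mathbf x_3]=[\mathbf x_5,\mathbf x_6]=\mathbf y_2$; (5) $N^{9,2}_5$: $[\mathbf x_1,\mathbf x_7]=[\mathbf x_3,\mathbf x_4]=[\mathbf x_5,\mathbf x_6]=\mathbf y_1$, $[\mathbf x_7,\mathbf x_3]=[\mathbf x_4,\mathbf x_5]=[\mathbf x_6,\mathbf x_2]=\mathbf y_2$. *)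

theory Defs
  imports Complex_Main
begin

datatype bidx = X1 | X2 | X3 | X4 | X5 | X6 | X7 | Y1 | Y2

lemma UNIV_bidx: "(UNIV :: bidx set) = {X1, X2, X3, X4, X5, X6, X7, Y1, Y2}"
  by (auto intro: bidx.exhaust)

instance bidx :: finite
  by standard (simp add: UNIV_bidx)

type_synonym vec9 = "bidx \<Rightarrow> complex"

text \<open>Structure constants from a list of relations [a,b] = c (a triple (a,b,c));
  the brackets obtained by antisymmetry get sign -1; all others are zero.
  sc L i j k is the coefficient of basis vector k in [e_i, e_j].\<close>
definition sc :: "(bidx \<times> bidx \<times> bidx) list \<Rightarrow> bidx \<Rightarrow> bidx \<Rightarrow> bidx \<Rightarrow> complex" where
  "sc L i j k = (if (i, j, k) \<in> set L then 1 else if (j, i, k) \<in> set L then -1 else 0)"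

definition lbr :: "(bidx \<Rightarrow> bidx \<Rightarrow> bidx \<Rightarrow> complex) \<Rightarrow> vec9 \<Rightarrow> vec9 \<Rightarrow> vec9" where
  "lbr c u v = (\<lambda>k. \<Sum>i\<in>UNIV. \<Sum>j\<in>UNIV. u i * v j * c i j k)"

definition clinear9 :: "(vec9 \<Rightarrow> vec9) \<Rightarrow> bool" where
  "clinear9 f \<longleftrightarrow> (\<forall>u v. f (\<lambda>k. u k + v k) = (\<lambda>k. f u k + f v k)) \<and>
                    (\<forall>a u. f (\<lambda>k. a * u k) = (\<lambda>k. a * f u k))"

definition lie_isomorphic :: "(bidx \<Rightarrow> bidx \<Rightarrow> bidx \<Rightarrow> complex) \<Rightarrow> (bidx \<Rightarrow> bidx \<Rightarrow> bidx \<Rightarrow> complex) \<Rightarrow> bool" where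
  "lie_isomorphic c d \<longleftrightarrow> (\<exists>f. clinear9 f \<and> bij f \<and> (\<forall>u v. f (lbr c u v) = lbr d (f u) (f v)))"

definition N92 :: "nat \<Rightarrow> bidx \<Rightarrow> bidx \<Rightarrow> bidx \<Rightarrow> complex" where
  "N92 n = (if n = 1 then sc [(X1,X2,Y1),(X4,X5,Y1),(X6,X7,Y1),(X3,X7,Y2)]
       else if n = 2 then sc [(X2,X7,Y1),(X4,X5,Y1),(X1,X3,Y2),(X6,X7,Y2)]
       else if n = 3 then sc [(X1,X2,Y1),(X3,X7,Y1),(X5,X6,Y1),(X4,X6,Y2),(X5,X7,Y2)]
       else if n = 4 then sc [(X7,X2,Y1),(X4,X5,Y1),(X6,X1,Y1),(X7,X3,Y2),(X5,X6,Y2)]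
       else sc [(X1,X7,Y1),(X3,X4,Y1),(X5,X6,Y1),(X7,X3,Y2),(X4,X5,Y2),(X6,X2,Y2)])"

end

theory Submission
  imports Defs "HOL-Library.Function_Algebras"
begin

(* For z in the algebra g let K(z) = {u. [u, g] is contained in the line C z}. A Lie algebra
  isomorphism f maps K(z) into K(f z), so the following are isomorphism invariants: whether some
  K(z) has dimension >= m, the dimension of the span of the z with dim K(z) >= 5, and whether some
  K(z) is non-abelian.
  In all five algebras the brackets lie in span{y1, y2}. Hence K(z) is contained in the radical of
  the skew form b [u,v]_1 - a [u,v]_2 if z = a y1 + b y2 is nonzero, and in the center otherwise,
  and everything reduces to the radicals of the pencil of forms s [u,v]_1 + t [u,v]_2. Only in N1 is
  some K(z) 7-dimensional (K(y1), as [x3, x7] = y2 is the only bracket with a y2-component); in N5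
  every radical has dimension at most 3, so no K(z) reaches dimension 5; in N2 both K(y1) and K(y2)
  are 5-dimensional, while in N3 and N4 the radicals with s <> 0 have dimension at most 3, so the z
  with dim K(z) >= 5 lie on C y1. Finally x1, x2 lie in K(y1) of N3 with [x1, x2] = y1, whereas in
  N4 every radical vanishes on x5, x6, x7 and every bracket of N4 involves one of them, so all K(z)
  are abelian. *)

type_synonym struct_const = "bidx \<Rightarrow> bidx \<Rightarrow> bidx \<Rightarrow> complex"

definition scale9 :: "complex \<Rightarrow> vec9 \<Rightarrow> vec9" where
  "scale9 a u = (\<lambda>k. a * u k)"

definition basis9 :: "bidx \<Rightarrow> vec9" where
  "basis9 i = (\<lambda>k. if k = i then 1 else 0)"

lemma scale9_apply [simp]: "scale9 a u k = a * u k"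
  by (simp add: scale9_def)

lemma basis9_apply [simp]: "basis9 i k = (if k = i then 1 else 0)"
  by (simp add: basis9_def)

interpretation C9: vector_space scale9
  by unfold_locales (auto simp: scale9_def fun_eq_iff algebra_simps)

lemma sum_vec9_apply: "(sum f A :: vec9) k = (\<Sum>a\<in>A. f a k)"
  by (induction A rule: infinite_finite_induct) auto

lemma inj_basis9: "inj basis9"
  by (auto simp: inj_def basis9_def fun_eq_iff split: if_splits)

lemma vec9_eq_sum_basis9: "u = (\<Sum>k\<in>UNIV. scale9 (u k) (basis9 k))"
  by (simp add: fun_eq_iff sum_vec9_apply scale9_def if_distrib[of "times _"] cong: if_cong)

lemma independent_basis9: "C9.independent (basis9 ` A)"
proof
  assume "C9.dependent (basis9 ` A)"
  then obtain c where c: "\<exists>v\<in>basis9 ` A. c v \<noteq> 0" "(\<Sum>v\<in>basis9 ` A. scale9 (c v) v) = 0"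
    using C9.dependent_finite[of "basis9 ` A"] by auto
  then obtain a where a: "a \<in> A" "c (basis9 a) \<noteq> 0" by blast
  have "0 = (\<Sum>v\<in>basis9 ` A. scale9 (c v) v) a" using c(2) by simp
  also have "\<dots> = (\<Sum>b\<in>A. c (basis9 b) * basis9 b a)"
    by (simp add: sum_vec9_apply sum.reindex[OF inj_on_subset[OF inj_basis9]] scale9_def)
  also have "\<dots> = c (basis9 a)"
    using a(1) by (simp add: if_distrib[of "times _"] eq_commute[of a] cong: if_cong)
  finally show False using a(2) by simp
qed

interpretation C9: finite_dimensional_vector_space scale9 "range basis9"
proof
  show "C9.span (range basis9) = UNIV"
  proof (intro set_eqI iffI UNIV_I)
    fix u :: vec9
    show "u \<in> C9.span (range basis9)"
      by (subst vec9_eq_sum_basis9) (intro C9.span_sum C9.span_scale C9.span_base rangeI)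
  qed
qed (simp_all add: independent_basis9)

interpretation C9_pair: finite_dimensional_vector_space_pair_1 scale9 "range basis9" scale9 ..

lemma card_le_dim_if_basis9_subset: "basis9 ` A \<subseteq> S \<Longrightarrow> card A \<le> C9.dim S"
  using C9.dim_subset[of "basis9 ` A" S] C9.dim_eq_card_independent[OF independent_basis9]
  by (simp add: card_image inj_on_subset[OF inj_basis9])

lemma dim_le_card_if_determined:
  assumes S: "C9.subspace S" and det: "\<And>u. u \<in> S \<Longrightarrow> (\<And>k. k \<in> A \<Longrightarrow> u k = 0) \<Longrightarrow> u = 0"
  shows "C9.dim S \<le> card A"
proof -
  define p :: "vec9 \<Rightarrow> vec9" where "p u = (\<lambda>k. if k \<in> A then u k else 0)" for u
  have lin: "Vector_Spaces.linear scale9 scale9 p"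
    by (auto simp: Vector_Spaces.linear_iff C9.vector_space_axioms p_def scale9_def fun_eq_iff)
  have "inj_on p S"
  proof (rule inj_onI)
    fix u v assume "u \<in> S" "v \<in> S" "p u = p v"
    then have "u - v = 0"
      by (intro det) (auto simp: C9.subspace_diff[OF S] p_def fun_eq_iff split: if_splits)
    then show "u = v" by simp
  qed
  then have "C9.dim S = C9.dim (p ` S)"
    using C9_pair.dim_image_eq[OF lin, of S] C9.span_eq_iff[THEN iffD2, OF S] by simp
  also have "\<dots> \<le> card (basis9 ` A)"
  proof (rule C9.dim_le_card)
    show "p ` S \<subseteq> C9.span (basis9 ` A)"
    proof
      fix w assume "w \<in> p ` S"
      then obtain u where "w = p u" by blast
      then have "w = (\<Sum>k\<in>A. scale9 (u k) (basis9 k))"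
        by (simp add: fun_eq_iff sum_vec9_apply scale9_def p_def if_distrib[of "times _"] cong: if_cong)
      then show "w \<in> C9.span (basis9 ` A)"
        by (simp add: C9.span_sum C9.span_scale C9.span_base)
    qed
  qed simp
  also have "\<dots> \<le> card A" by (rule card_image_le) simp
  finally show ?thesis .
qed

lemma clinear9_iff_linear: "clinear9 f \<longleftrightarrow> Vector_Spaces.linear scale9 scale9 f"
  by (simp add: clinear9_def Vector_Spaces.linear_iff C9.vector_space_axioms scale9_def plus_fun_def)

definition lie_iso :: "(vec9 \<Rightarrow> vec9) \<Rightarrow> struct_const \<Rightarrow> struct_const \<Rightarrow> bool" where
  "lie_iso f c d \<longleftrightarrow> Vector_Spaces.linear scale9 scale9 f \<and> bij f \<and> (\<forall>u v. f (lbr c u v) = lbr d (f u) (f v))"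

lemma lie_isomorphic_iff: "lie_isomorphic c d \<longleftrightarrow> (\<exists>f. lie_iso f c d)"
  by (simp add: lie_isomorphic_def lie_iso_def clinear9_iff_linear)

lemma lie_iso_inv:
  assumes "lie_iso f c d"
  shows "lie_iso (inv f) d c"
proof -
  interpret f: Vector_Spaces.linear scale9 scale9 f
    using assms by (simp add: lie_iso_def)
  have bij: "bij f" and hom: "\<And>u v. f (lbr c u v) = lbr d (f u) (f v)"
    using assms by (simp_all add: lie_iso_def)
  have f_inv: "f (inv f y) = y" for y
    using bij by (simp add: bij_is_surj surj_f_inv_f)
  have inv_eqI: "inv f y = x" if "f x = y" for x y
    using bij that by (simp add: bij_inv_eq_iff[symmetric])
  have "Vector_Spaces.linear scale9 scale9 (inv f)"
    by (simp add: Vector_Spaces.linear_iff C9.vector_space_axioms inv_eqI f.add f.scale f_inv)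
  moreover have "inv f (lbr d u v) = lbr c (inv f u) (inv f v)" for u v
    by (rule inv_eqI) (simp add: hom f_inv)
  ultimately show ?thesis
    using bij_imp_bij_inv[OF bij] by (simp add: lie_iso_def)
qed

lemma lie_iso_dim_image:
  assumes "lie_iso f c d"
  shows "C9.dim (f ` S) = C9.dim S"
  using assms unfolding lie_iso_def
  by (metis C9_pair.dim_image_eq bij_is_inj inj_on_subset subset_UNIV)

definition ad_into_line :: "struct_const \<Rightarrow> vec9 \<Rightarrow> vec9 set" where
  "ad_into_line c z = {u. \<forall>v. \<exists>a. lbr c u v = scale9 a z}"

definition wide_targets :: "nat \<Rightarrow> struct_const \<Rightarrow> vec9 set" where
  "wide_targets m c = {z. m \<le> C9.dim (ad_into_line c z)}"

definition nonabelian_ad_into_line :: "struct_const \<Rightarrow> bool" where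
  "nonabelian_ad_into_line c \<longleftrightarrow> (\<exists>z. \<exists>u\<in>ad_into_line c z. \<exists>v\<in>ad_into_line c z. lbr c u v \<noteq> 0)"

lemma lie_iso_image_ad_into_line:
  assumes "lie_iso f c d"
  shows "f ` ad_into_line c z \<subseteq> ad_into_line d (f z)"
proof (clarsimp simp: ad_into_line_def)
  interpret f: Vector_Spaces.linear scale9 scale9 f
    using assms by (simp add: lie_iso_def)
  fix u w assume u: "\<forall>v. \<exists>a. lbr c u v = scale9 a z"
  obtain v where v: "w = f v"
    using assms by (meson lie_iso_def bij_is_surj surjD)
  obtain a where a: "lbr c u v = scale9 a z"
    using u by blast
  have "lbr d (f u) w = f (lbr c u v)"
    using assms v by (simp add: lie_iso_def)
  also have "\<dots> = scale9 a (f z)"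
    by (simp add: a f.scale)
  finally have "lbr d (f u) w = scale9 a (f z)" .
  then show "\<exists>a. lbr d (f u) w = scale9 a (f z)" ..
qed

lemma lie_iso_image_wide_targets:
  assumes "lie_iso f c d"
  shows "f ` wide_targets m c \<subseteq> wide_targets m d"
proof (clarsimp simp: wide_targets_def)
  fix z assume "m \<le> C9.dim (ad_into_line c z)"
  also have "\<dots> = C9.dim (f ` ad_into_line c z)"
    using lie_iso_dim_image[OF assms] by simp
  also have "\<dots> \<le> C9.dim (ad_into_line d (f z))"
    by (rule C9.dim_subset[OF lie_iso_image_ad_into_line[OF assms]])
  finally show "m \<le> C9.dim (ad_into_line d (f z))" .
qed

lemma lie_iso_nonabelian_ad_into_line:
  assumes "lie_iso f c d" and "nonabelian_ad_into_line c"
  shows "nonabelian_ad_into_line d"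
proof -
  interpret f: Vector_Spaces.linear scale9 scale9 f
    using assms by (simp add: lie_iso_def)
  obtain z u v where uv: "u \<in> ad_into_line c z" "v \<in> ad_into_line c z" "lbr c u v \<noteq> 0"
    using assms(2) by (auto simp: nonabelian_ad_into_line_def)
  have "lbr d (f u) (f v) \<noteq> 0"
    using uv(3) assms(1) f.zero by (metis lie_iso_def bij_is_inj injD)
  then show ?thesis
    using uv lie_iso_image_ad_into_line[OF assms(1)] unfolding nonabelian_ad_into_line_def by blast
qed

lemma lie_isomorphic_invariants:
  assumes "lie_isomorphic c d"
  shows "wide_targets m c = {} \<longleftrightarrow> wide_targets m d = {}"
    and "C9.dim (wide_targets m c) = C9.dim (wide_targets m d)"
    and "nonabelian_ad_into_line c \<longleftrightarrow> nonabelian_ad_into_line d"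
proof -
  have mono: "(wide_targets m c' \<noteq> {} \<longrightarrow> wide_targets m d' \<noteq> {})
      \<and> C9.dim (wide_targets m c') \<le> C9.dim (wide_targets m d')
      \<and> (nonabelian_ad_into_line c' \<longrightarrow> nonabelian_ad_into_line d')" if f: "lie_iso f c' d'" for f c' d'
    using lie_iso_image_wide_targets[OF f, of m] lie_iso_dim_image[OF f, of "wide_targets m c'"]
      C9.dim_subset[OF lie_iso_image_wide_targets[OF f, of m]] lie_iso_nonabelian_ad_into_line[OF f]
    by auto
  obtain f where f: "lie_iso f c d"
    using assms by (auto simp: lie_isomorphic_iff)
  show "wide_targets m c = {} \<longleftrightarrow> wide_targets m d = {}"
    and "C9.dim (wide_targets m c) = C9.dim (wide_targets m d)"
    and "nonabelian_ad_into_line c \<longleftrightarrow> nonabelian_ad_into_line d"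
    using mono[OF f] mono[OF lie_iso_inv[OF f]] by auto
qed

definition form_radical :: "struct_const \<Rightarrow> complex \<Rightarrow> complex \<Rightarrow> vec9 set" where
  "form_radical c s t = {u. \<forall>v. s * lbr c u v Y1 + t * lbr c u v Y2 = 0}"

definition lie_center :: "struct_const \<Rightarrow> vec9 set" where
  "lie_center c = {u. \<forall>v. lbr c u v = 0}"

definition derived_in_span_Y :: "struct_const \<Rightarrow> bool" where
  "derived_in_span_Y c \<longleftrightarrow> (\<forall>i j k. k \<noteq> Y1 \<longrightarrow> k \<noteq> Y2 \<longrightarrow> c i j k = 0)"

lemma lbr_add_left: "lbr c (u + u') v = lbr c u v + lbr c u' v"
  by (simp add: lbr_def fun_eq_iff distrib_right sum.distrib)

lemma lbr_scale_left: "lbr c (scale9 a u) v = scale9 a (lbr c u v)"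
  by (simp add: lbr_def fun_eq_iff scale9_def sum_distrib_left mult.assoc)

lemma lbr_basis9_left: "lbr c (basis9 i) v k = (\<Sum>j\<in>UNIV. v j * c i j k)"
proof -
  have "lbr c (basis9 i) v k = (\<Sum>i'\<in>UNIV. basis9 i i' * (\<Sum>j\<in>UNIV. v j * c i' j k))"
    by (simp add: lbr_def sum_distrib_left mult.assoc)
  then show ?thesis
    by (simp add: if_distrib[of "\<lambda>x. x * _"] cong: if_cong)
qed

lemma lbr_basis9_right: "lbr c u (basis9 j) k = (\<Sum>i\<in>UNIV. u i * c i j k)"
  by (simp add: lbr_def if_distrib[of "times _"] if_distrib[of "\<lambda>x. x * _"] cong: if_cong)

lemma derived_in_span_Y_lbr: "derived_in_span_Y c \<Longrightarrow> k \<noteq> Y1 \<Longrightarrow> k \<noteq> Y2 \<Longrightarrow> lbr c u v k = 0"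
  by (simp add: derived_in_span_Y_def lbr_def)

lemma subspace_form_radical: "C9.subspace (form_radical c s t)"
proof -
  have "s * (x + x') + t * (y + y') = (s * x + t * y) + (s * x' + t * y')"
    and "s * (a * x) + t * (a * y) = a * (s * x + t * y)" for a x x' y y' :: complex
    by (simp_all add: algebra_simps)
  moreover have "lbr c 0 v = 0" for v
    by (simp add: lbr_def fun_eq_iff)
  ultimately show ?thesis
    unfolding C9.subspace_def form_radical_def
    by (auto simp: lbr_add_left lbr_scale_left)
qed

lemma form_radical_coordinates:
  "u \<in> form_radical c s t \<Longrightarrow> (\<Sum>i\<in>UNIV. u i * (s * c i j Y1 + t * c i j Y2)) = 0"
  unfolding form_radical_def mem_Collect_eq
  by (drule spec[of _ "basis9 j"])
    (simp add: lbr_basis9_right sum_distrib_left algebra_simps flip: sum.distrib)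

lemma ad_into_line_subset_form_radical: "ad_into_line c z \<subseteq> form_radical c (z Y2) (- z Y1)"
proof (clarsimp simp: ad_into_line_def form_radical_def)
  fix u v assume "\<forall>v. \<exists>a. lbr c u v = scale9 a z"
  then obtain a where "lbr c u v = scale9 a z" by blast
  then show "z Y2 * lbr c u v Y1 = z Y1 * lbr c u v Y2" by simp
qed

lemma ad_into_line_cases:
  assumes "derived_in_span_Y c"
  obtains "ad_into_line c z \<subseteq> lie_center c"
    | "\<forall>k. k \<noteq> Y1 \<longrightarrow> k \<noteq> Y2 \<longrightarrow> z k = 0" "(z Y1, z Y2) \<noteq> (0, 0)"
proof (cases "(z Y1, z Y2) \<noteq> (0, 0) \<and> (\<forall>k. k \<noteq> Y1 \<longrightarrow> k \<noteq> Y2 \<longrightarrow> z k = 0)")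
  case True
  with that(2) show ?thesis by blast
next
  case off_Y: False
  have "lbr c u v = 0" if u: "u \<in> ad_into_line c z" for u v
  proof -
    obtain a where a: "lbr c u v = scale9 a z"
      using u unfolding ad_into_line_def by blast
    have "a = 0 \<or> z = 0"
    proof (cases "\<exists>k. k \<noteq> Y1 \<and> k \<noteq> Y2 \<and> z k \<noteq> 0")
      case True
      then obtain k where "k \<noteq> Y1" "k \<noteq> Y2" "z k \<noteq> 0" by blast
      then show ?thesis
        using derived_in_span_Y_lbr[OF assms, of k u v] a by (simp add: scale9_def)
    next
      case False
      have "z k = 0" for k
        using False off_Y by (cases k) auto
      then show ?thesis by (simp add: fun_eq_iff)
    qed
    then show ?thesis
      using a by (auto simp: scale9_def fun_eq_iff)
  qed
  then show ?thesis
    using that(1) by (auto simp: lie_center_def)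
qed

lemma lie_center_subset_form_radical: "lie_center c \<subseteq> form_radical c s t"
  by (simp add: lie_center_def form_radical_def subset_iff)

lemma ad_into_line_subset_some_form_radical:
  assumes "derived_in_span_Y c"
  obtains s t where "(s, t) \<noteq> (0, 0)" "ad_into_line c z \<subseteq> form_radical c s t"
proof (cases rule: ad_into_line_cases[OF assms, of z])
  case 1
  then have "ad_into_line c z \<subseteq> form_radical c 1 0"
    using lie_center_subset_form_radical by (rule order_trans)
  with that[of 1 0] show ?thesis by simp
next
  case 2
  then show ?thesis
    using that[of "z Y2" "- z Y1"] ad_into_line_subset_form_radical by auto
qed

lemma dim_ad_into_line_le:
  assumes "derived_in_span_Y c" and "\<And>s t. (s, t) \<noteq> (0, 0) \<Longrightarrow> C9.dim (form_radical c s t) \<le> n"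
  shows "C9.dim (ad_into_line c z) \<le> n"
  by (rule ad_into_line_subset_some_form_radical[OF assms(1), of z])
    (use assms(2) C9.dim_subset order_trans in blast)

lemma wide_targets_subset_span_Y1:
  assumes "derived_in_span_Y c" and "\<And>s t. s \<noteq> 0 \<Longrightarrow> C9.dim (form_radical c s t) < m"
  shows "wide_targets m c \<subseteq> C9.span {basis9 Y1}"
proof
  fix z assume "z \<in> wide_targets m c"
  then have wide: "\<not> ad_into_line c z \<subseteq> form_radical c s t" if "s \<noteq> 0" for s t
    using assms(2)[OF that, of t] C9.dim_subset[of "ad_into_line c z" "form_radical c s t"]
    by (auto simp: wide_targets_def)
  show "z \<in> C9.span {basis9 Y1}"
  proof (cases rule: ad_into_line_cases[OF assms(1), of z])
    case 1
    then have "ad_into_line c z \<subseteq> form_radical c 1 0"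
      using lie_center_subset_form_radical by (rule order_trans)
    with wide[of 1 0] show ?thesis by simp
  next
    case 2
    have "z Y2 = 0"
      using wide[of "z Y2" "- z Y1"] ad_into_line_subset_form_radical by blast
    with 2(1) have "z = scale9 (z Y1) (basis9 Y1)"
      by (auto simp: fun_eq_iff)
    then show ?thesis
      by (metis C9.span_base C9.span_scale singletonI)
  qed
qed

(* The bounded quantifiers let simp with UNIV_bidx unfold the hypotheses into the coordinate
  equations of the radical. *)
lemma form_radical_dim_le_card:
  assumes "\<And>u. \<forall>j\<in>UNIV. (\<Sum>i\<in>UNIV. u i * (s * c i j Y1 + t * c i j Y2)) = 0 \<Longrightarrow>
      \<forall>k\<in>A. u k = 0 \<Longrightarrow> u = 0"
  shows "C9.dim (form_radical c s t) \<le> card A"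
  using assms form_radical_coordinates by (intro dim_le_card_if_determined subspace_form_radical) blast

lemma lbr_eq_0_if_vanishing:
  assumes "\<And>i j k. c i j k \<noteq> 0 \<Longrightarrow> i \<in> B \<or> j \<in> B" and "\<forall>k\<in>B. u k = 0" "\<forall>k\<in>B. v k = 0"
  shows "lbr c u v = 0"
  unfolding lbr_def fun_eq_iff zero_fun_def
  by (metis (mono_tags, lifting) assms mult_eq_0_iff sum.neutral)

lemma basis9_in_ad_into_line:
  assumes "\<And>j k. k \<noteq> y \<Longrightarrow> c i j k = 0"
  shows "basis9 i \<in> ad_into_line c (basis9 y)"
proof (clarsimp simp: ad_into_line_def)
  fix v
  have "lbr c (basis9 i) v = scale9 (lbr c (basis9 i) v y) (basis9 y)"
    using assms by (auto simp: fun_eq_iff lbr_basis9_left)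
  then show "\<exists>a. lbr c (basis9 i) v = scale9 a (basis9 y)" ..
qed

lemma basis9_in_wide_targets:
  assumes "\<And>i j k. i \<in> A \<Longrightarrow> k \<noteq> y \<Longrightarrow> c i j k = 0" and "m \<le> card A"
  shows "basis9 y \<in> wide_targets m c"
proof -
  have "card A \<le> C9.dim (ad_into_line c (basis9 y))"
    using assms(1) basis9_in_ad_into_line by (intro card_le_dim_if_basis9_subset) blast
  with assms(2) show ?thesis
    by (simp add: wide_targets_def)
qed

lemma all_bidx: "(\<forall>k. P k) \<longleftrightarrow> P X1 \<and> P X2 \<and> P X3 \<and> P X4 \<and> P X5 \<and> P X6 \<and> P X7 \<and> P Y1 \<and> P Y2"
  by (metis bidx.exhaust)

lemma derived_in_span_Y_N92: "derived_in_span_Y (N92 n)"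
  by (simp add: derived_in_span_Y_def N92_def sc_def)

lemma dim_form_radical_N92_2:
  assumes "(s, t) \<noteq> (0, 0)"
  shows "C9.dim (form_radical (N92 2) s t) \<le> 5" (is "C9.dim ?R \<le> _")
proof -
  have "C9.dim ?R \<le> card {X2, X4, X5, Y1, Y2}" if "s = 0" "t \<noteq> 0"
    using that by (intro form_radical_dim_le_card) (auto simp: N92_def sc_def UNIV_bidx fun_eq_iff all_bidx)
  moreover have "C9.dim ?R \<le> card {X1, X3, X6, Y1, Y2}" if "s \<noteq> 0" "t = 0"
    using that by (intro form_radical_dim_le_card) (auto simp: N92_def sc_def UNIV_bidx fun_eq_iff all_bidx)
  moreover have "C9.dim ?R \<le> card {X2, Y1, Y2}" if "s \<noteq> 0" "t \<noteq> 0"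
    using that by (intro form_radical_dim_le_card) (auto simp: N92_def sc_def UNIV_bidx fun_eq_iff all_bidx)
  ultimately show ?thesis
    using assms by (cases "s = 0"; cases "t = 0") auto
qed

lemma dim_form_radical_N92_3:
  shows "s \<noteq> 0 \<Longrightarrow> C9.dim (form_radical (N92 3) s t) \<le> 3"
    and "(s, t) \<noteq> (0, 0) \<Longrightarrow> C9.dim (form_radical (N92 3) s t) \<le> 5"
proof -
  have "C9.dim (form_radical (N92 3) s t) \<le> card {X4, Y1, Y2}" if "s \<noteq> 0"
    using that by (intro form_radical_dim_le_card) (auto simp: N92_def sc_def UNIV_bidx fun_eq_iff all_bidx)
  then show generic: "C9.dim (form_radical (N92 3) s t) \<le> 3" if "s \<noteq> 0"
    using that by simp
  have "C9.dim (form_radical (N92 3) 0 t) \<le> card {X1, X2, X3, Y1, Y2}" if "t \<noteq> 0"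
    using that by (intro form_radical_dim_le_card) (auto simp: N92_def sc_def UNIV_bidx fun_eq_iff all_bidx)
  with generic show "C9.dim (form_radical (N92 3) s t) \<le> 5" if "(s, t) \<noteq> (0, 0)"
    using that by (cases "s = 0") fastforce+
qed

lemma dim_form_radical_N92_4:
  shows "s \<noteq> 0 \<Longrightarrow> C9.dim (form_radical (N92 4) s t) \<le> 3"
    and "(s, t) \<noteq> (0, 0) \<Longrightarrow> C9.dim (form_radical (N92 4) s t) \<le> 5"
proof -
  have "C9.dim (form_radical (N92 4) s t) \<le> card {X3, Y1, Y2}" if "s \<noteq> 0"
    using that by (intro form_radical_dim_le_card) (auto simp: N92_def sc_def UNIV_bidx fun_eq_iff all_bidx)
  then show generic: "C9.dim (form_radical (N92 4) s t) \<le> 3" if "s \<noteq> 0"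
    using that by simp
  have "C9.dim (form_radical (N92 4) 0 t) \<le> card {X1, X2, X4, Y1, Y2}" if "t \<noteq> 0"
    using that by (intro form_radical_dim_le_card) (auto simp: N92_def sc_def UNIV_bidx fun_eq_iff all_bidx)
  with generic show "C9.dim (form_radical (N92 4) s t) \<le> 5" if "(s, t) \<noteq> (0, 0)"
    using that by (cases "s = 0") fastforce+
qed

lemma dim_form_radical_N92_5:
  assumes "(s, t) \<noteq> (0, 0)"
  shows "C9.dim (form_radical (N92 5) s t) \<le> 3" (is "C9.dim ?R \<le> _")
proof -
  have "C9.dim ?R \<le> card {X1, Y1, Y2}" if "s = 0" "t \<noteq> 0"
    using that by (intro form_radical_dim_le_card) (auto simp: N92_def sc_def UNIV_bidx fun_eq_iff all_bidx)
  moreover have "C9.dim ?R \<le> card {X2, Y1, Y2}" if "s \<noteq> 0" "t = 0"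
    using that by (intro form_radical_dim_le_card) (auto simp: N92_def sc_def UNIV_bidx fun_eq_iff all_bidx)
  moreover have "C9.dim ?R \<le> card {X5, Y1, Y2}" if "s \<noteq> 0" "t \<noteq> 0"
    using that by (intro form_radical_dim_le_card) (auto simp: N92_def sc_def UNIV_bidx fun_eq_iff all_bidx)
  ultimately show ?thesis
    using assms by (cases "s = 0"; cases "t = 0") auto
qed

lemma form_radical_N92_4_vanishing:
  assumes "(s, t) \<noteq> (0, 0)" and "u \<in> form_radical (N92 4) s t"
  shows "\<forall>k\<in>{X5, X6, X7}. u k = 0"
proof -
  have "\<forall>j\<in>UNIV. (\<Sum>i\<in>UNIV. u i * (s * N92 4 i j Y1 + t * N92 4 i j Y2)) = 0"
    using form_radical_coordinates[OF assms(2)] by blast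
  with assms(1) show ?thesis
    by (cases "s = 0") (auto simp: N92_def sc_def UNIV_bidx)
qed

lemma wide_targets_7_N92_1: "basis9 Y1 \<in> wide_targets 7 (N92 1)"
  by (rule basis9_in_wide_targets[where A = "{X1, X2, X4, X5, X6, Y1, Y2}"]) (auto simp: N92_def sc_def)

lemma wide_targets_7_N92_empty:
  assumes "n \<in> {2, 3, 4, 5}"
  shows "wide_targets 7 (N92 n) = {}"
proof -
  have dim_le: "C9.dim (ad_into_line (N92 n) z) \<le> 5" for z
  proof (rule dim_ad_into_line_le[OF derived_in_span_Y_N92])
    fix s t :: complex assume "(s, t) \<noteq> (0, 0)"
    then show "C9.dim (form_radical (N92 n) s t) \<le> 5"
      using assms dim_form_radical_N92_2 dim_form_radical_N92_3(2) dim_form_radical_N92_4(2)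
        dim_form_radical_N92_5[of s t] by auto
  qed
  have "\<not> 7 \<le> C9.dim (ad_into_line (N92 n) z)" for z
    using dim_le[of z] by simp
  then show ?thesis
    by (simp add: wide_targets_def)
qed

lemma wide_targets_5_N92_5: "wide_targets 5 (N92 5) = {}"
proof -
  have dim_le: "C9.dim (ad_into_line (N92 5) z) \<le> 3" for z
    by (rule dim_ad_into_line_le[OF derived_in_span_Y_N92 dim_form_radical_N92_5])
  have "\<not> 5 \<le> C9.dim (ad_into_line (N92 5) z)" for z
    using dim_le[of z] by simp
  then show ?thesis
    by (simp add: wide_targets_def)
qed

lemma dim_wide_targets_5_N92_2: "2 \<le> C9.dim (wide_targets 5 (N92 2))"
proof -
  have "basis9 Y1 \<in> wide_targets 5 (N92 2)"
    by (rule basis9_in_wide_targets[where A = "{X2, X4, X5, Y1, Y2}"]) (auto simp: N92_def sc_def)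
  moreover have "basis9 Y2 \<in> wide_targets 5 (N92 2)"
    by (rule basis9_in_wide_targets[where A = "{X1, X3, X6, Y1, Y2}"]) (auto simp: N92_def sc_def)
  ultimately have "card {Y1, Y2} \<le> C9.dim (wide_targets 5 (N92 2))"
    by (intro card_le_dim_if_basis9_subset) auto
  then show ?thesis by simp
qed

lemma wide_targets_5_N92_3: "basis9 Y1 \<in> wide_targets 5 (N92 3)"
  by (rule basis9_in_wide_targets[where A = "{X1, X2, X3, Y1, Y2}"]) (auto simp: N92_def sc_def)

lemma wide_targets_5_N92_4: "basis9 Y1 \<in> wide_targets 5 (N92 4)"
  by (rule basis9_in_wide_targets[where A = "{X1, X2, X4, Y1, Y2}"]) (auto simp: N92_def sc_def)

lemma dim_wide_targets_5_N92_3_4: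
  assumes "n \<in> {3, 4}"
  shows "C9.dim (wide_targets 5 (N92 n)) \<le> 1"
proof -
  have "wide_targets 5 (N92 n) \<subseteq> C9.span {basis9 Y1}"
  proof (rule wide_targets_subset_span_Y1[OF derived_in_span_Y_N92])
    fix s t :: complex assume "s \<noteq> 0"
    then have "C9.dim (form_radical (N92 n) s t) \<le> 3"
      using assms dim_form_radical_N92_3(1) dim_form_radical_N92_4(1) by blast
    then show "C9.dim (form_radical (N92 n) s t) < 5"
      by simp
  qed
  then have "C9.dim (wide_targets 5 (N92 n)) \<le> card {basis9 Y1}"
    by (rule C9.dim_le_card) simp
  then show ?thesis by simp
qed

lemma nonabelian_ad_into_line_N92_3: "nonabelian_ad_into_line (N92 3)"
proof -
  have "basis9 X1 \<in> ad_into_line (N92 3) (basis9 Y1)" "basis9 X2 \<in> ad_into_line (N92 3) (basis9 Y1)"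
    by (auto intro!: basis9_in_ad_into_line simp: N92_def sc_def)
  moreover have "lbr (N92 3) (basis9 X1) (basis9 X2) Y1 = 1"
    by (simp add: lbr_basis9_left UNIV_bidx N92_def sc_def)
  ultimately show ?thesis
    unfolding nonabelian_ad_into_line_def by (metis one_neq_zero zero_fun_apply)
qed

lemma abelian_ad_into_line_N92_4: "\<not> nonabelian_ad_into_line (N92 4)"
proof (clarsimp simp: nonabelian_ad_into_line_def)
  fix z u v assume uv: "u \<in> ad_into_line (N92 4) z" "v \<in> ad_into_line (N92 4) z"
  obtain s t where "(s, t) \<noteq> (0, 0)" "ad_into_line (N92 4) z \<subseteq> form_radical (N92 4) s t"
    using ad_into_line_subset_some_form_radical[OF derived_in_span_Y_N92] by blast
  with uv have "\<forall>k\<in>{X5, X6, X7}. u k = 0" "\<forall>k\<in>{X5, X6, X7}. v k = 0"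
    using form_radical_N92_4_vanishing by blast+
  then show "lbr (N92 4) u v = 0"
    by (rule lbr_eq_0_if_vanishing[rotated]) (auto simp: N92_def sc_def split: if_splits)
qed

theorem theorem3:
  assumes "i \<in> {1..5::nat}" and "j \<in> {1..5::nat}" and "i \<noteq> j"
  shows "\<not> lie_isomorphic (N92 i) (N92 j)"
proof
  assume "lie_isomorphic (N92 i) (N92 j)"
  note same = lie_isomorphic_invariants[OF this]
  have "i \<in> {1, 2, 3, 4, 5}" "j \<in> {1, 2, 3, 4, 5}"
    using assms(1,2) by auto
  then show False
    using assms(3) same(1)[of 7] same(1)[of 5] same(2)[of 5] same(3)
      wide_targets_7_N92_1 wide_targets_7_N92_empty[of 2] wide_targets_7_N92_empty[of 3]
      wide_targets_7_N92_empty[of 4] wide_targets_7_N92_empty[of 5] wide_targets_5_N92_5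
      wide_targets_5_N92_3 wide_targets_5_N92_4 dim_wide_targets_5_N92_2
      dim_wide_targets_5_N92_3_4[of 3] dim_wide_targets_5_N92_3_4[of 4]
      nonabelian_ad_into_line_N92_3 abelian_ad_into_line_N92_4
    by auto
qed

end
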